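(* Let $R$ be a left noetherian domain and let $A=\sigma(R)\langle x_1,\dots,x_n\rangle$ be a quasi-commutative bijective skew PBW extension of $R$. (i) If $f=c\,x^{\alpha}h\in A$, where $c\in R^*$ is a unit of $R$ that is normal in $R$ (i.e. $cR=Rc$), $x^\alpha\in\mathrm{Mon}(A)$, and $h\in Z(A)$ (the center of $A$), then $f$ is normal in $A$. (ii) If $f=c_1x^{\alpha_1}+\cdots+c_tx^{\alpha_t}\in A$ with $c_i\in R\setminus\{0\}$ and pairwise distinct standard monomials $x^{\alpha_1},\dots,x^{\alpha_t}$, and $f$ is normal in $A$, then each $c_i$ is normal in $R$, i.e. $c_iR=Rc_i$ for every $1\le i\le t$.
   Context: Skew PBW extension: a ring $A$ is a skew PBW extension of a ring $R$, written $A=\sigma(R)\langle x_1,\dots,x_n\rangle$, if (1) $R\subseteq A$ is a subring; (2) there are $x_1,\dots,x_n\in A$ such that $A$ is a free left $R$-module with basis $\mathrm{Mon}(A)=\{x^\alpha=x_1^{\alpha_1}\cdots x_n^{\alpha_n}:\alpha\in\mathbb N^n\}$ (the standard monomials); (3) for every $i$ and every $r\in R\setminus\{0\}$ there is $c_{i,r}\in R\setminus\{0\}$ with $x_ir-c_{i,r}x_i\in R$; (4) for every $i,j$ there is $c_{i,j}\in R\setminus\{0\}$ with $x_jx_i-c_{i,j}x_ix_j\in R+Rx_1+\cdots+Rx_n$. For each $i$ there are then an injective ring endomorphism $\sigma_i$ of $R$ and a $\sigma_i$-derivation $\delta_i$ of $R$ with $x_ir=\sigma_i(r)x_i+\delta_i(r)$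 for all $r\in R$. $A$ is bijective if every $\sigma_i$ is bijective and every $c_{i,j}$ is invertible. $A$ is quasi-commutative if conditions (3),(4) are replaced by: for every $i$ and $r\in R\setminus\{0\}$ there is $c_{i,r}\in R\setminus\{0\}$ with $x_ir=c_{i,r}x_i$, and for every $i,j$ there is $c_{i,j}\in R\setminus\{0\}$ with $x_jx_i=c_{i,j}x_ix_j$ (so all $\delta_i=0$). Under these hypotheses $A$ is a domain. An element $f$ of a ring $B$ is normal if $Bf=fB$. *)

theory Defs
  imports Main
begin

text \<open>Rings are modelled as types of class ring_1 (the ring A is the whole type);
  the coefficient ring R is a subset of A which is a subring.\<close>

definition subring :: "'a::ring_1 set \<Rightarrow> bool" where
  "subring R \<longleftrightarrow> 0 \<in> R \<and> 1 \<in> R \<and>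
     (\<forall>a\<in>R. \<forall>b\<in>R. a + b \<in> R \<and> - a \<in> R \<and> a * b \<in> R)"

definition ring_domain :: "'a::ring_1 set \<Rightarrow> bool" where
  "ring_domain R \<longleftrightarrow> (1::'a) \<noteq> 0 \<and> (\<forall>a\<in>R. \<forall>b\<in>R. a * b = 0 \<longrightarrow> a = 0 \<or> b = 0)"

definition left_ideal :: "'a::ring_1 set \<Rightarrow> 'a set \<Rightarrow> bool" where
  "left_ideal R I \<longleftrightarrow> I \<subseteq> R \<and> 0 \<in> I \<and>
     (\<forall>a\<in>I. \<forall>b\<in>I. a + b \<in> I) \<and> (\<forall>r\<in>R. \<forall>a\<in>I. r * a \<in> I)"

definition left_noetherian :: "'a::ring_1 set \<Rightarrow> bool" where
  "left_noetherian R \<longleftrightarrow>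
     (\<forall>I :: nat \<Rightarrow> 'a set. (\<forall>k. left_ideal R (I k)) \<and> (\<forall>k. I k \<subseteq> I (Suc k))
        \<longrightarrow> (\<exists>m. \<forall>k\<ge>m. I k = I m))"

definition exps :: "nat \<Rightarrow> (nat \<Rightarrow> nat) set" where
  "exps n = {\<alpha>. \<forall>i\<ge>n. \<alpha> i = 0}"

definition mon :: "(nat \<Rightarrow> 'a::ring_1) \<Rightarrow> nat \<Rightarrow> (nat \<Rightarrow> nat) \<Rightarrow> 'a" where
  "mon x n \<alpha> = prod_list (map (\<lambda>i. x i ^ \<alpha> i) [0..<n])"

definition left_free_mon_basis :: "'a::ring_1 set \<Rightarrow> (nat \<Rightarrow> 'a) \<Rightarrow> nat \<Rightarrow> bool" where
  "left_free_mon_basis R x n \<longleftrightarrow>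
     (\<forall>f::'a. \<exists>!c :: (nat \<Rightarrow> nat) \<Rightarrow> 'a.
        (\<forall>\<alpha>. c \<alpha> \<in> R) \<and> finite {\<alpha>. c \<alpha> \<noteq> 0} \<and> {\<alpha>. c \<alpha> \<noteq> 0} \<subseteq> exps n \<and>
        f = (\<Sum>\<alpha>\<in>{\<alpha>. c \<alpha> \<noteq> 0}. c \<alpha> * mon x n \<alpha>))"

definition unit_in :: "'a::ring_1 set \<Rightarrow> 'a \<Rightarrow> bool" where
  "unit_in R c \<longleftrightarrow> c \<in> R \<and> (\<exists>d\<in>R. c * d = 1 \<and> d * c = 1)"

definition normal_in :: "'a::ring_1 set \<Rightarrow> 'a \<Rightarrow> bool" where
  "normal_in B f \<longleftrightarrow> (\<lambda>b. b * f) ` B = (\<lambda>b. f * b) ` B"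

definition center :: "'a::ring_1 set" where
  "center = {h. \<forall>a. a * h = h * a}"

definition sigma :: "'a::ring_1 set \<Rightarrow> (nat \<Rightarrow> 'a) \<Rightarrow> nat \<Rightarrow> 'a \<Rightarrow> 'a" where
  "sigma R x i r = (THE s. s \<in> R \<and> x i * r = s * x i)"

definition qc_bij_skew_PBW :: "'a::ring_1 set \<Rightarrow> (nat \<Rightarrow> 'a) \<Rightarrow> nat \<Rightarrow> bool" where
  "qc_bij_skew_PBW R x n \<longleftrightarrow>
     subring R \<and> left_free_mon_basis R x n \<and>
     (\<forall>i<n. \<forall>r\<in>R - {0}. \<exists>c\<in>R - {0}. x i * r = c * x i) \<and>
     (\<forall>i<n. \<forall>j<n. \<exists>c\<in>R - {0}. x j * x i = c * x i * x j) \<and>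
     (\<forall>i<n. bij_betw (sigma R x i) R R) \<and>
     (\<forall>i<n. \<forall>j<n. \<exists>c. unit_in R c \<and> x j * x i = c * x i * x j)"

end

theory Submission
  imports Defs "HOL-Library.Function_Algebras"
begin

text \<open>
  (i) Units and central elements are normal, and so is each variable x_i: the elements a with
  x_i a \<in> A x_i form a subring containing R (x_i r = \<sigma>_i(r) x_i) and every x_j (x_i x_j = c x_j x_i
  with c a unit), and symmetrically for a x_i \<in> x_i A, using that \<sigma>_i is onto. Products of
  normal elements are normal.

  (ii) Since x^\<alpha> x^\<beta> is a unit multiple of x^(\<alpha>+\<beta>) and R is a domain, the lexicographically
  leading exponent of a product is the sum of the leading exponents. Hence if r f = f b with
  r \<in> R, the support of f b is that of f and b \<in> R; comparing the coefficients of x^(\<alpha>_i) gives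
  r c_i = c_i s_i with x^(\<alpha>_i) b = s_i x^(\<alpha>_i). The inclusion c_i R \<subseteq> R c_i is symmetric, starting
  from r x^(\<alpha>_i) = x^(\<alpha>_i) r'.
\<close>

lemma normal_in_UNIV_iff:
  "normal_in UNIV p \<longleftrightarrow> (\<forall>a. \<exists>b. a * p = p * b) \<and> (\<forall>a. \<exists>b. p * a = b * p)"
  unfolding normal_in_def by (auto simp: set_eq_iff image_iff)

lemma normal_in_UNIV_mult:
  assumes "normal_in UNIV p" "normal_in UNIV q"
  shows "normal_in UNIV (p * q)"
  unfolding normal_in_UNIV_iff
proof (intro conjI allI)
  fix a
  obtain b where "a * p = p * b" using assms(1) normal_in_UNIV_iff by blast
  moreover obtain b' where "b * q = q * b'" using assms(2) normal_in_UNIV_iff by blast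
  ultimately have "a * (p * q) = p * q * b'" by (metis mult.assoc)
  then show "\<exists>b. a * (p * q) = p * q * b" ..
next
  fix a
  obtain b where "q * a = b * q" using assms(2) normal_in_UNIV_iff by blast
  moreover obtain b' where "p * b = b' * p" using assms(1) normal_in_UNIV_iff by blast
  ultimately have "p * q * a = b' * (p * q)" by (metis mult.assoc)
  then show "\<exists>b. p * q * a = b * (p * q)" ..
qed

lemma normal_in_UNIV_1: "normal_in UNIV 1"
  unfolding normal_in_UNIV_iff by auto

lemma normal_in_UNIV_power: "normal_in UNIV p \<Longrightarrow> normal_in UNIV (p ^ k)"
  by (induction k) (auto intro: normal_in_UNIV_1 normal_in_UNIV_mult)

lemma normal_in_UNIV_prod_list:
  "(\<And>p. p \<in> set ps \<Longrightarrow> normal_in UNIV p) \<Longrightarrow> normal_in UNIV (prod_list ps)"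
  by (induction ps) (auto intro: normal_in_UNIV_1 normal_in_UNIV_mult)

lemma normal_in_UNIV_invertible:
  assumes "c * d = 1" "d * c = 1"
  shows "normal_in UNIV c"
proof -
  have "a * c = c * (d * a * c)" for a by (metis assms(1) mult.assoc mult_1_left)
  moreover have "c * a = (c * a * d) * c" for a by (metis assms(2) mult.assoc mult_1_right)
  ultimately show ?thesis unfolding normal_in_UNIV_iff by blast
qed

lemma normal_in_UNIV_center: "h \<in> center \<Longrightarrow> normal_in UNIV h"
  unfolding center_def normal_in_UNIV_iff by auto

lemma moves_left_past_closed:
  fixes p :: "'a::ring_1"
  shows "0 \<in> {a. \<exists>b. p * a = b * p}" "1 \<in> {a. \<exists>b. p * a = b * p}"
    and "a \<in> {a. \<exists>b. p * a = b * p} \<Longrightarrow> a' \<in> {a. \<exists>b. p * a = b * p} \<Longrightarrow>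
      a + a' \<in> {a. \<exists>b. p * a = b * p}"
    and "a \<in> {a. \<exists>b. p * a = b * p} \<Longrightarrow> a' \<in> {a. \<exists>b. p * a = b * p} \<Longrightarrow>
      a * a' \<in> {a. \<exists>b. p * a = b * p}"
proof -
  show "0 \<in> {a. \<exists>b. p * a = b * p}" "1 \<in> {a. \<exists>b. p * a = b * p}"
    by (auto intro: exI[of _ 0] exI[of _ 1])
  assume "a \<in> {a. \<exists>b. p * a = b * p}" "a' \<in> {a. \<exists>b. p * a = b * p}"
  then obtain b b' where b: "p * a = b * p" "p * a' = b' * p" by blast
  have "p * (a + a') = (b + b') * p" by (simp add: b distrib_left distrib_right)
  moreover have "p * (a * a') = (b * b') * p" by (metis b mult.assoc)
  ultimately show "a + a' \<in> {a. \<exists>b. p * a = b * p}" "a * a' \<in> {a. \<exists>b. p * a = b * p}"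
    by blast+
qed

lemma moves_right_past_closed:
  fixes p :: "'a::ring_1"
  shows "0 \<in> {a. \<exists>b. a * p = p * b}" "1 \<in> {a. \<exists>b. a * p = p * b}"
    and "a \<in> {a. \<exists>b. a * p = p * b} \<Longrightarrow> a' \<in> {a. \<exists>b. a * p = p * b} \<Longrightarrow>
      a + a' \<in> {a. \<exists>b. a * p = p * b}"
    and "a \<in> {a. \<exists>b. a * p = p * b} \<Longrightarrow> a' \<in> {a. \<exists>b. a * p = p * b} \<Longrightarrow>
      a * a' \<in> {a. \<exists>b. a * p = p * b}"
proof -
  show "0 \<in> {a. \<exists>b. a * p = p * b}" "1 \<in> {a. \<exists>b. a * p = p * b}"
    by (auto intro: exI[of _ 0] exI[of _ 1])
  assume "a \<in> {a. \<exists>b. a * p = p * b}" "a' \<in> {a. \<exists>b. a * p = p * b}"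
  then obtain b b' where b: "a * p = p * b" "a' * p = p * b'" by blast
  have "(a + a') * p = p * (b + b')" by (simp add: b distrib_left distrib_right)
  moreover have "(a * a') * p = p * (b * b')" by (metis b mult.assoc)
  ultimately show "a + a' \<in> {a. \<exists>b. a * p = p * b}" "a * a' \<in> {a. \<exists>b. a * p = p * b}"
    by blast+
qed

lemma unit_in_1: "subring R \<Longrightarrow> unit_in R 1"
  unfolding unit_in_def subring_def by auto

lemma unit_in_mult:
  assumes "subring R" "unit_in R u" "unit_in R v"
  shows "unit_in R (u * v)"
proof -
  obtain d d' where d: "d \<in> R" "u * d = 1" "d * u = 1" and d': "d' \<in> R" "v * d' = 1" "d' * v = 1"
    using assms(2,3) unfolding unit_in_def by blast
  have "u * v * (d' * d) = 1" "d' * d * (u * v) = 1"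
    by (metis d d' mult.assoc mult_1_left)+
  with assms d d' show ?thesis unfolding unit_in_def subring_def by blast
qed

subsection \<open>The lexicographic order on exponent vectors\<close>

definition lex_less :: "(nat \<Rightarrow> nat) \<Rightarrow> (nat \<Rightarrow> nat) \<Rightarrow> bool" where
  "lex_less \<alpha> \<beta> \<longleftrightarrow> (\<exists>k. \<alpha> k < \<beta> k \<and> (\<forall>i<k. \<alpha> i = \<beta> i))"

definition lex_le :: "(nat \<Rightarrow> nat) \<Rightarrow> (nat \<Rightarrow> nat) \<Rightarrow> bool" where
  "lex_le \<alpha> \<beta> \<longleftrightarrow> \<alpha> = \<beta> \<or> lex_less \<alpha> \<beta>"

lemma lex_less_irrefl: "\<not> lex_less \<alpha> \<alpha>"
  unfolding lex_less_def by auto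

lemma lex_less_trans:
  assumes "lex_less \<alpha> \<beta>" "lex_less \<beta> \<gamma>"
  shows "lex_less \<alpha> \<gamma>"
proof -
  obtain k where k: "\<alpha> k < \<beta> k" "\<forall>i<k. \<alpha> i = \<beta> i"
    using assms(1) unfolding lex_less_def by blast
  obtain l where l: "\<beta> l < \<gamma> l" "\<forall>i<l. \<beta> i = \<gamma> i"
    using assms(2) unfolding lex_less_def by blast
  have "\<alpha> (min k l) < \<gamma> (min k l)" "\<forall>i<min k l. \<alpha> i = \<gamma> i"
    using k l by (auto simp: min_def not_less order.order_iff_strict)
  then show ?thesis unfolding lex_less_def by blast
qed

lemma lex_less_total: "\<alpha> \<noteq> \<beta> \<Longrightarrow> lex_less \<alpha> \<beta> \<or> lex_less \<beta> \<alpha>"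
proof -
  assume "\<alpha> \<noteq> \<beta>"
  then have ex: "\<exists>k. \<alpha> k \<noteq> \<beta> k" by auto
  define k where "k = (LEAST k. \<alpha> k \<noteq> \<beta> k)"
  have "\<alpha> k \<noteq> \<beta> k" unfolding k_def using ex by (rule LeastI_ex)
  moreover have "\<forall>i<k. \<alpha> i = \<beta> i" unfolding k_def using not_less_Least by blast
  ultimately show ?thesis unfolding lex_less_def by (metis linorder_neqE_nat)
qed

interpretation lex_order: linorder lex_le lex_less
proof
  show "lex_less \<alpha> \<beta> = (lex_le \<alpha> \<beta> \<and> \<not> lex_le \<beta> \<alpha>)" for \<alpha> \<beta>
    unfolding lex_le_def using lex_less_irrefl lex_less_trans by blast
  show "lex_le \<alpha> \<alpha>" for \<alpha> unfolding lex_le_def by simp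
  show "lex_le \<alpha> \<gamma>" if "lex_le \<alpha> \<beta>" "lex_le \<beta> \<gamma>" for \<alpha> \<beta> \<gamma>
    using that lex_less_trans unfolding lex_le_def by blast
  show "\<alpha> = \<beta>" if "lex_le \<alpha> \<beta>" "lex_le \<beta> \<alpha>" for \<alpha> \<beta>
    using that lex_less_irrefl lex_less_trans unfolding lex_le_def by blast
  show "lex_le \<alpha> \<beta> \<or> lex_le \<beta> \<alpha>" for \<alpha> \<beta>
    using lex_less_total unfolding lex_le_def by blast
qed

lemma lex_le_zero: "lex_le 0 \<alpha>"
  using lex_less_total[of 0 \<alpha>] unfolding lex_le_def lex_less_def by auto

lemma lex_less_add_right: "lex_less \<alpha> \<beta> \<Longrightarrow> lex_less (\<alpha> + \<gamma>) (\<beta> + \<gamma>)"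
  unfolding lex_less_def by auto

lemma lex_le_add_right: "lex_le \<alpha> \<beta> \<Longrightarrow> lex_le (\<alpha> + \<gamma>) (\<beta> + \<gamma>)"
  unfolding lex_le_def using lex_less_add_right by blast

lemma lex_le_add_eq:
  assumes "lex_le \<alpha>' \<alpha>" "lex_le \<beta>' \<beta>" "\<alpha>' + \<beta>' = \<alpha> + \<beta>"
  shows "\<alpha>' = \<alpha> \<and> \<beta>' = \<beta>"
proof -
  have "lex_le (\<alpha>' + \<beta>') (\<alpha> + \<beta>')" "lex_le (\<alpha> + \<beta>') (\<alpha> + \<beta>)"
    using assms(1,2) lex_le_add_right add.commute by metis+
  then have "\<alpha> + \<beta>' = \<alpha> + \<beta>" using assms(3) lex_order.order.antisym by metis
  then have "\<beta>' = \<beta>" by simp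
  with assms(3) show ?thesis by simp
qed

lemma finite_has_lex_max:
  assumes "finite S" "S \<noteq> {}"
  obtains m where "m \<in> S" "\<And>\<beta>. \<beta> \<in> S \<Longrightarrow> lex_le \<beta> m"
  using lex_order.finite_has_maximal[OF assms] lex_order.linear by metis

locale qc_skew_PBW =
  fixes R :: "'a::ring_1 set" and x :: "nat \<Rightarrow> 'a" and n :: nat
  assumes domain: "ring_domain R" and PBW: "qc_bij_skew_PBW R x n"
begin

lemma subring: "subring R"
  using PBW unfolding qc_bij_skew_PBW_def by blast

lemma zero_in_R: "0 \<in> R" and one_in_R: "1 \<in> R"
  and add_in_R: "a \<in> R \<Longrightarrow> b \<in> R \<Longrightarrow> a + b \<in> R"
  and mult_in_R: "a \<in> R \<Longrightarrow> b \<in> R \<Longrightarrow> a * b \<in> R"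
  using subring unfolding subring_def by blast+

lemma sum_in_R: "(\<And>i. i \<in> I \<Longrightarrow> g i \<in> R) \<Longrightarrow> sum g I \<in> R"
  by (induction I rule: infinite_finite_induct) (auto intro: add_in_R zero_in_R)

lemma no_zero_divisors_R: "a \<in> R \<Longrightarrow> b \<in> R \<Longrightarrow> a \<noteq> 0 \<Longrightarrow> b \<noteq> 0 \<Longrightarrow> a * b \<noteq> 0"
  using domain unfolding ring_domain_def by blast

lemma unit_in_R: "unit_in R u \<Longrightarrow> u \<in> R"
  unfolding unit_in_def by blast

lemma mult_unit_nonzero: "unit_in R u \<Longrightarrow> a \<noteq> 0 \<Longrightarrow> a * u \<noteq> 0"
  unfolding unit_in_def by (metis mult.assoc mult_1_right mult_zero_left)

definition is_expansion :: "((nat \<Rightarrow> nat) \<Rightarrow> 'a) \<Rightarrow> 'a \<Rightarrow> bool" where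
  "is_expansion c a \<longleftrightarrow> (\<forall>\<alpha>. c \<alpha> \<in> R) \<and> finite {\<alpha>. c \<alpha> \<noteq> 0} \<and> {\<alpha>. c \<alpha> \<noteq> 0} \<subseteq> exps n \<and>
     a = (\<Sum>\<alpha>\<in>{\<alpha>. c \<alpha> \<noteq> 0}. c \<alpha> * mon x n \<alpha>)"

definition coeff :: "'a \<Rightarrow> (nat \<Rightarrow> nat) \<Rightarrow> 'a" where
  "coeff a = (THE c. is_expansion c a)"

definition supp :: "'a \<Rightarrow> (nat \<Rightarrow> nat) set" where
  "supp a = {\<alpha>. coeff a \<alpha> \<noteq> 0}"

lemma ex1_expansion: "\<exists>!c. is_expansion c a"
  using PBW unfolding qc_bij_skew_PBW_def left_free_mon_basis_def is_expansion_def by blast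

lemma is_expansion_coeff: "is_expansion (coeff a) a"
  unfolding coeff_def using ex1_expansion by (rule theI')

lemma coeff_eqI: "is_expansion c a \<Longrightarrow> coeff a = c"
  unfolding coeff_def by (rule the1_equality[OF ex1_expansion])

lemma coeff_in_R: "coeff a \<alpha> \<in> R"
  and finite_supp: "finite (supp a)"
  and supp_subset_exps: "supp a \<subseteq> exps n"
  and expansion: "a = (\<Sum>\<alpha>\<in>supp a. coeff a \<alpha> * mon x n \<alpha>)"
  using is_expansion_coeff[of a] unfolding is_expansion_def supp_def by blast+

lemma supp_empty_iff: "supp a = {} \<longleftrightarrow> a = 0"
proof
  show "supp a = {} \<Longrightarrow> a = 0" using expansion[of a] by simp
  have "is_expansion (\<lambda>_. 0) 0" unfolding is_expansion_def using zero_in_R by simp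
  then show "a = 0 \<Longrightarrow> supp a = {}" unfolding supp_def using coeff_eqI by auto
qed

lemma coeff_sum_monomials:
  assumes "finite I" "\<And>i. i \<in> I \<Longrightarrow> r i \<in> R" "\<And>i. i \<in> I \<Longrightarrow> \<gamma> i \<in> exps n"
  shows "coeff (\<Sum>i\<in>I. r i * mon x n (\<gamma> i)) = (\<lambda>\<delta>. \<Sum>i\<in>{i\<in>I. \<gamma> i = \<delta>}. r i)"
proof -
  define c where "c = (\<lambda>\<delta>. \<Sum>i\<in>{i\<in>I. \<gamma> i = \<delta>}. r i)"
  have supp_c: "{\<delta>. c \<delta> \<noteq> 0} \<subseteq> \<gamma> ` I"
    unfolding c_def by (auto elim: sum.not_neutral_contains_not_neutral)
  have "(\<Sum>i\<in>I. r i * mon x n (\<gamma> i)) = (\<Sum>\<delta>\<in>\<gamma> ` I. c \<delta> * mon x n \<delta>)"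
    unfolding c_def sum_distrib_right
    by (rule sum.image_gen[OF assms(1), THEN trans]) (auto intro!: sum.cong)
  also have "\<dots> = (\<Sum>\<delta>\<in>{\<delta>. c \<delta> \<noteq> 0}. c \<delta> * mon x n \<delta>)"
    by (rule sum.mono_neutral_right) (use assms(1) supp_c in auto)
  moreover have "c \<delta> \<in> R" for \<delta>
    unfolding c_def using assms(2) by (auto intro: sum_in_R)
  moreover have "finite {\<delta>. c \<delta> \<noteq> 0}" "{\<delta>. c \<delta> \<noteq> 0} \<subseteq> exps n"
    using supp_c assms(1,3) by (auto intro: finite_subset)
  ultimately have "is_expansion c (\<Sum>i\<in>I. r i * mon x n (\<gamma> i))"
    unfolding is_expansion_def by simp
  then show ?thesis unfolding c_def by (rule coeff_eqI)
qed

lemma coeff_monomial: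
  "r \<in> R \<Longrightarrow> \<gamma> \<in> exps n \<Longrightarrow> coeff (r * mon x n \<gamma>) = (\<lambda>\<delta>. if \<delta> = \<gamma> then r else 0)"
  using coeff_sum_monomials[of "{()}" "\<lambda>_. r" "\<lambda>_. \<gamma>"] by (auto simp: fun_eq_iff)

lemma monomial_cancel:
  "r \<in> R \<Longrightarrow> s \<in> R \<Longrightarrow> \<gamma> \<in> exps n \<Longrightarrow> r * mon x n \<gamma> = s * mon x n \<gamma> \<Longrightarrow> r = s"
  by (metis coeff_monomial)

lemma mon_0 [simp]: "mon x 0 \<gamma> = 1"
  unfolding mon_def by simp

lemma mon_Suc [simp]: "mon x (Suc m) \<gamma> = mon x m \<gamma> * x m ^ \<gamma> m"
  unfolding mon_def by simp

lemma mon_zero [simp]: "mon x m 0 = 1"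
  by (induction m) simp_all

lemma mon_cong: "(\<And>i. i < m \<Longrightarrow> \<gamma> i = \<gamma>' i) \<Longrightarrow> mon x m \<gamma> = mon x m \<gamma>'"
  by (induction m) simp_all

lemma mon_unit_vector: "i < n \<Longrightarrow> mon x n (0(i := 1)) = x i"
proof -
  have "mon x m (0(i := 1)) = (if i < m then x i else 1)" for m
    by (induction m) (auto simp: less_Suc_eq)
  then show "i < n \<Longrightarrow> ?thesis" by simp
qed

lemma x_cancel: "i < n \<Longrightarrow> s \<in> R \<Longrightarrow> s' \<in> R \<Longrightarrow> s * x i = s' * x i \<Longrightarrow> s = s'"
  using monomial_cancel[of s s' "0(i := 1)"] mon_unit_vector[of i] by (auto simp: exps_def)

lemma x_times_R:
  assumes "i < n" "r \<in> R"
  obtains s where "s \<in> R" "x i * r = s * x i" "r \<noteq> 0 \<Longrightarrow> s \<noteq> 0"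
proof (cases "r = 0")
  case True
  then show ?thesis using that zero_in_R by simp
next
  case False
  then show ?thesis using that PBW assms unfolding qc_bij_skew_PBW_def by blast
qed

lemma R_times_x:
  assumes i: "i < n" and s: "s \<in> R"
  obtains r where "r \<in> R" "x i * r = s * x i"
proof -
  have sigma: "sigma R x i r \<in> R \<and> x i * r = sigma R x i r * x i" if "r \<in> R" for r
  proof -
    have "\<exists>!s. s \<in> R \<and> x i * r = s * x i"
      using x_times_R[OF i that] x_cancel[OF i] by metis
    then show ?thesis unfolding sigma_def by (rule theI')
  qed
  have "sigma R x i ` R = R"
    using PBW i unfolding qc_bij_skew_PBW_def bij_betw_def by blast
  then obtain r where "r \<in> R" "s = sigma R x i r" using s by blast
  with sigma that show ?thesis by metis
qed

lemma x_commute: "i < n \<Longrightarrow> j < n \<Longrightarrow> \<exists>c. unit_in R c \<and> x j * x i = c * x i * x j"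
  using PBW unfolding qc_bij_skew_PBW_def by blast

definition normalizes_R :: "'a \<Rightarrow> bool" where
  "normalizes_R a \<longleftrightarrow>
     (\<forall>r\<in>R. \<exists>s\<in>R. a * r = s * a \<and> (r \<noteq> 0 \<longrightarrow> s \<noteq> 0) \<and> (unit_in R r \<longrightarrow> unit_in R s)) \<and>
     (\<forall>s\<in>R. \<exists>r\<in>R. a * r = s * a)"

lemma normalizes_R_1: "normalizes_R 1"
  unfolding normalizes_R_def by auto

lemma normalizes_R_mult:
  assumes a: "normalizes_R a" and b: "normalizes_R b"
  shows "normalizes_R (a * b)"
  unfolding normalizes_R_def
proof (intro conjI ballI)
  fix r assume "r \<in> R"
  then obtain s where s: "s \<in> R" "b * r = s * b" "r \<noteq> 0 \<longrightarrow> s \<noteq> 0" "unit_in R r \<longrightarrow> unit_in R s"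
    using b unfolding normalizes_R_def by blast
  then obtain s' where "s' \<in> R" "a * s = s' * a" "s \<noteq> 0 \<longrightarrow> s' \<noteq> 0" "unit_in R s \<longrightarrow> unit_in R s'"
    using a unfolding normalizes_R_def by blast
  with s show "\<exists>s\<in>R. a * b * r = s * (a * b) \<and> (r \<noteq> 0 \<longrightarrow> s \<noteq> 0) \<and> (unit_in R r \<longrightarrow> unit_in R s)"
    by (metis mult.assoc)
next
  fix s assume "s \<in> R"
  then obtain r where r: "r \<in> R" "a * r = s * a" using a unfolding normalizes_R_def by blast
  then obtain r' where "r' \<in> R" "b * r' = r * b" using b unfolding normalizes_R_def by blast
  with r show "\<exists>r\<in>R. a * b * r = s * (a * b)" by (metis mult.assoc)
qed

lemma normalizes_R_power: "normalizes_R a \<Longrightarrow> normalizes_R (a ^ k)"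
  by (induction k) (auto intro: normalizes_R_1 normalizes_R_mult)

lemma normalizes_R_x:
  assumes i: "i < n"
  shows "normalizes_R (x i)"
  unfolding normalizes_R_def
proof (intro conjI ballI)
  fix r assume r: "r \<in> R"
  obtain s where s: "s \<in> R" "x i * r = s * x i" "r \<noteq> 0 \<Longrightarrow> s \<noteq> 0"
    using x_times_R[OF i r] by blast
  have "unit_in R s" if u: "unit_in R r"
  proof -
    obtain d where d: "d \<in> R" "r * d = 1" "d * r = 1" using u unfolding unit_in_def by blast
    obtain s' where s': "s' \<in> R" "x i * d = s' * x i" using x_times_R[OF i d(1)] by blast
    have "(s * s') * x i = 1 * x i" "(s' * s) * x i = 1 * x i"
      by (metis d(2,3) mult.assoc mult_1_left mult_1_right s'(2) s(2))+
    then have "s * s' = 1" "s' * s = 1"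
      using x_cancel[OF i] mult_in_R s s' one_in_R by blast+
    with s s' show ?thesis unfolding unit_in_def by blast
  qed
  with s show "\<exists>s\<in>R. x i * r = s * x i \<and> (r \<noteq> 0 \<longrightarrow> s \<noteq> 0) \<and> (unit_in R r \<longrightarrow> unit_in R s)"
    by blast
next
  fix s assume "s \<in> R"
  then show "\<exists>r\<in>R. x i * r = s * x i" using R_times_x[OF i] by metis
qed

lemma normalizes_R_mon: "m \<le> n \<Longrightarrow> normalizes_R (mon x m \<gamma>)"
  by (induction m) (simp_all add: normalizes_R_1 normalizes_R_mult normalizes_R_power normalizes_R_x)

lemma normalizes_R_times_R:
  assumes "normalizes_R a" "r \<in> R"
  obtains s where "s \<in> R" "a * r = s * a" "r \<noteq> 0 \<Longrightarrow> s \<noteq> 0"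
  using assms unfolding normalizes_R_def by blast

lemma normalizes_R_times_unit:
  assumes "normalizes_R a" "unit_in R u"
  obtains v where "unit_in R v" "a * u = v * a"
  using assms unit_in_R unfolding normalizes_R_def by blast

subsection \<open>Products of standard monomials\<close>

lemma units_mult: "unit_in R u \<Longrightarrow> unit_in R v \<Longrightarrow> unit_in R (u * v)"
  using unit_in_mult[OF subring] .

lemma x_power_commute:
  assumes j: "j < n" and k: "k < n"
  shows "\<exists>c. unit_in R c \<and> x j * x k ^ m = c * x k ^ m * x j"
proof (induction m)
  case 0
  then show ?case using unit_in_1[OF subring] by auto
next
  case (Suc m)
  then obtain c where c: "unit_in R c" "x j * x k ^ m = c * x k ^ m * x j" by blast
  obtain c' where c': "unit_in R c'" "x j * x k = c' * x k * x j" using x_commute[OF k j] by blast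
  obtain v where v: "unit_in R v" "x k * c = v * x k"
    using normalizes_R_times_unit[OF normalizes_R_x[OF k] c(1)] .
  have "x j * x k ^ Suc m = c' * x k * (x j * x k ^ m)" by (metis c'(2) mult.assoc power_Suc)
  also have "\<dots> = c' * (x k * c) * x k ^ m * x j" by (simp add: c(2) mult.assoc)
  also have "\<dots> = (c' * v) * x k ^ Suc m * x j" by (simp add: v(2) mult.assoc)
  finally show ?case using units_mult[OF c'(1) v(1)] by blast
qed

lemma x_times_mon:
  assumes j: "j < n"
  shows "m \<le> n \<Longrightarrow> \<exists>u. unit_in R u \<and>
    x j * mon x m \<gamma> = (if j < m then u * mon x m (\<gamma>(j := \<gamma> j + 1)) else u * mon x m \<gamma> * x j)"
proof (induction m)
  case 0
  then show ?case using unit_in_1[OF subring] by auto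
next
  case (Suc m)
  then obtain u where u: "unit_in R u"
    "x j * mon x m \<gamma> = (if j < m then u * mon x m (\<gamma>(j := \<gamma> j + 1)) else u * mon x m \<gamma> * x j)"
    by auto
  consider "j < m" | "j = m" | "m < j" by linarith
  then show ?case
  proof cases
    case 1
    then have "x j * mon x (Suc m) \<gamma> = u * mon x (Suc m) (\<gamma>(j := \<gamma> j + 1))"
      using u by (simp add: mult.assoc[symmetric])
    with u 1 show ?thesis by auto
  next
    case 2
    have "mon x m (\<gamma>(j := \<gamma> j + 1)) = mon x m \<gamma>" by (rule mon_cong) (use 2 in auto)
    then have "x j * mon x (Suc m) \<gamma> = u * mon x (Suc m) (\<gamma>(j := \<gamma> j + 1))"
      using u 2 by (simp add: mult.assoc[symmetric])
    with u 2 show ?thesis by auto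
  next
    case 3
    obtain c where c: "unit_in R c" "x j * x m ^ \<gamma> m = c * x m ^ \<gamma> m * x j"
      using x_power_commute[OF j, of m] Suc.prems by auto
    have "normalizes_R (mon x m \<gamma>)" using Suc.prems by (simp add: normalizes_R_mon)
    then obtain v where v: "unit_in R v" "mon x m \<gamma> * c = v * mon x m \<gamma>"
      using normalizes_R_times_unit c(1) by blast
    have "x j * mon x (Suc m) \<gamma> = u * mon x m \<gamma> * (x j * x m ^ \<gamma> m)"
      using u 3 by (simp add: mult.assoc[symmetric])
    also have "\<dots> = u * (mon x m \<gamma> * c) * x m ^ \<gamma> m * x j" by (simp add: c(2) mult.assoc)
    also have "\<dots> = (u * v) * mon x (Suc m) \<gamma> * x j" by (simp add: v(2) mult.assoc)
    finally show ?thesis using units_mult[OF u(1) v(1)] 3 by auto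
  qed
qed

lemma x_power_times_mon:
  assumes j: "j < n"
  shows "\<exists>u. unit_in R u \<and> x j ^ k * mon x n \<gamma> = u * mon x n (\<gamma>(j := \<gamma> j + k))"
proof (induction k arbitrary: \<gamma>)
  case 0
  then show ?case using unit_in_1[OF subring] by auto
next
  case (Suc k)
  obtain u where u: "unit_in R u" "x j * mon x n \<gamma> = u * mon x n (\<gamma>(j := \<gamma> j + 1))"
    using x_times_mon[OF j order_refl, of \<gamma>] j by auto
  obtain v where v: "unit_in R v" "x j ^ k * u = v * x j ^ k"
    using normalizes_R_times_unit[OF normalizes_R_power[OF normalizes_R_x[OF j]] u(1)] .
  have "(\<gamma>(j := \<gamma> j + 1))(j := (\<gamma>(j := \<gamma> j + 1)) j + k) = \<gamma>(j := \<gamma> j + Suc k)" by simp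
  then obtain u' where u': "unit_in R u'"
    "x j ^ k * mon x n (\<gamma>(j := \<gamma> j + 1)) = u' * mon x n (\<gamma>(j := \<gamma> j + Suc k))"
    using Suc.IH[of "\<gamma>(j := \<gamma> j + 1)"] by metis
  have "x j ^ Suc k * mon x n \<gamma> = (x j ^ k * u) * mon x n (\<gamma>(j := \<gamma> j + 1))"
    by (metis power_Suc2 u(2) mult.assoc)
  also have "\<dots> = (v * u') * mon x n (\<gamma>(j := \<gamma> j + Suc k))"
    by (metis v(2) u'(2) mult.assoc)
  finally show ?case using units_mult[OF v(1) u'(1)] by blast
qed

lemma mon_times_mon_partial:
  "m \<le> n \<Longrightarrow> \<exists>u. unit_in R u \<and>
     mon x m \<alpha> * mon x n \<beta> = u * mon x n (\<lambda>i. if i < m then \<alpha> i + \<beta> i else \<beta> i)"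
proof (induction m arbitrary: \<beta>)
  case 0
  then show ?case using unit_in_1[OF subring] by auto
next
  case (Suc m)
  then have m: "m < n" by simp
  define \<beta>' where "\<beta>' = \<beta>(m := \<beta> m + \<alpha> m)"
  obtain u where u: "unit_in R u" "x m ^ \<alpha> m * mon x n \<beta> = u * mon x n \<beta>'"
    using x_power_times_mon[OF m] unfolding \<beta>'_def by blast
  have "normalizes_R (mon x m \<alpha>)" using m by (simp add: normalizes_R_mon)
  then obtain v where v: "unit_in R v" "mon x m \<alpha> * u = v * mon x m \<alpha>"
    using normalizes_R_times_unit u(1) by blast
  obtain u' where u': "unit_in R u'"
    "mon x m \<alpha> * mon x n \<beta>' = u' * mon x n (\<lambda>i. if i < m then \<alpha> i + \<beta>' i else \<beta>' i)"
    using Suc by auto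
  have "(\<lambda>i. if i < m then \<alpha> i + \<beta>' i else \<beta>' i) = (\<lambda>i. if i < Suc m then \<alpha> i + \<beta> i else \<beta> i)"
    by (auto simp: \<beta>'_def less_Suc_eq)
  moreover have "mon x (Suc m) \<alpha> * mon x n \<beta> = (mon x m \<alpha> * u) * mon x n \<beta>'"
    by (simp add: u(2) mult.assoc)
  ultimately have "mon x (Suc m) \<alpha> * mon x n \<beta> =
      (v * u') * mon x n (\<lambda>i. if i < Suc m then \<alpha> i + \<beta> i else \<beta> i)"
    by (simp add: v(2) u'(2) mult.assoc)
  then show ?case using units_mult[OF v(1) u'(1)] by blast
qed

lemma mon_mult:
  assumes "\<alpha> \<in> exps n"
  obtains u where "unit_in R u" "mon x n \<alpha> * mon x n \<beta> = u * mon x n (\<alpha> + \<beta>)"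
proof -
  have "(\<lambda>i. if i < n then \<alpha> i + \<beta> i else \<beta> i) = \<alpha> + \<beta>"
    using assms unfolding exps_def by auto
  then show ?thesis using mon_times_mon_partial[of n \<alpha> \<beta>] that by auto
qed

subsection \<open>Leading exponents of products\<close>

lemma monomial_times_monomial:
  assumes "r \<in> R - {0}" "s \<in> R - {0}" "\<alpha> \<in> exps n"
  obtains t where "t \<in> R - {0}" "(r * mon x n \<alpha>) * (s * mon x n \<beta>) = t * mon x n (\<alpha> + \<beta>)"
proof -
  have "normalizes_R (mon x n \<alpha>)" by (simp add: normalizes_R_mon)
  then obtain s' where s': "s' \<in> R" "mon x n \<alpha> * s = s' * mon x n \<alpha>" "s' \<noteq> 0"
    using normalizes_R_times_R assms(2) by blast
  obtain u where u: "unit_in R u" "mon x n \<alpha> * mon x n \<beta> = u * mon x n (\<alpha> + \<beta>)"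
    using mon_mult[OF assms(3)] by blast
  have "(r * mon x n \<alpha>) * (s * mon x n \<beta>) = r * (mon x n \<alpha> * s) * mon x n \<beta>"
    by (simp add: mult.assoc)
  also have "\<dots> = r * s' * (mon x n \<alpha> * mon x n \<beta>)" by (simp add: s'(2) mult.assoc)
  also have "\<dots> = (r * s' * u) * mon x n (\<alpha> + \<beta>)" by (simp add: u(2) mult.assoc)
  finally have "(r * mon x n \<alpha>) * (s * mon x n \<beta>) = (r * s' * u) * mon x n (\<alpha> + \<beta>)" .
  moreover have "r * s' * u \<in> R - {0}"
    using assms(1) s' u(1) unit_in_R by (simp add: mult_in_R no_zero_divisors_R mult_unit_nonzero)
  ultimately show ?thesis using that by blast
qed

lemma mult_expansion:
  obtains r where "\<And>p. p \<in> supp a \<times> supp b \<Longrightarrow> r p \<in> R - {0}"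
    "a * b = (\<Sum>p\<in>supp a \<times> supp b. r p * mon x n (fst p + snd p))"
proof -
  have "\<forall>p\<in>supp a \<times> supp b. \<exists>t. t \<in> R - {0} \<and>
      (coeff a (fst p) * mon x n (fst p)) * (coeff b (snd p) * mon x n (snd p)) = t * mon x n (fst p + snd p)"
  proof
    fix p assume p: "p \<in> supp a \<times> supp b"
    then have "coeff a (fst p) \<in> R - {0}" "coeff b (snd p) \<in> R - {0}" "fst p \<in> exps n"
      using coeff_in_R supp_subset_exps[of a] unfolding supp_def by auto
    then obtain t where "t \<in> R - {0}"
      "(coeff a (fst p) * mon x n (fst p)) * (coeff b (snd p) * mon x n (snd p)) = t * mon x n (fst p + snd p)"
      by (rule monomial_times_monomial)
    then show "\<exists>t. t \<in> R - {0} \<and> (coeff a (fst p) * mon x n (fst p)) * (coeff b (snd p) * mon x n (snd p))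
        = t * mon x n (fst p + snd p)" by blast
  qed
  from bchoice[OF this] obtain r where r: "\<forall>p\<in>supp a \<times> supp b. r p \<in> R - {0} \<and>
      (coeff a (fst p) * mon x n (fst p)) * (coeff b (snd p) * mon x n (snd p)) = r p * mon x n (fst p + snd p)"
    by blast
  then have mem: "p \<in> supp a \<times> supp b \<Longrightarrow> r p \<in> R - {0}" for p by blast
  have "a * b = (\<Sum>\<alpha>\<in>supp a. \<Sum>\<beta>\<in>supp b. (coeff a \<alpha> * mon x n \<alpha>) * (coeff b \<beta> * mon x n \<beta>))"
    by (subst expansion[of a], subst expansion[of b]) (rule sum_product)
  also have "\<dots> = (\<Sum>p\<in>supp a \<times> supp b. r p * mon x n (fst p + snd p))"
    unfolding sum.cartesian_product using r by (intro sum.cong) auto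
  finally have "a * b = (\<Sum>p\<in>supp a \<times> supp b. r p * mon x n (fst p + snd p))" .
  with mem show ?thesis by (rule that)
qed

lemma lex_max_add_in_supp_mult:
  assumes "\<alpha>\<^sub>0 \<in> supp a" "\<And>\<alpha>. \<alpha> \<in> supp a \<Longrightarrow> lex_le \<alpha> \<alpha>\<^sub>0"
    and "\<beta>\<^sub>0 \<in> supp b" "\<And>\<beta>. \<beta> \<in> supp b \<Longrightarrow> lex_le \<beta> \<beta>\<^sub>0"
  shows "\<alpha>\<^sub>0 + \<beta>\<^sub>0 \<in> supp (a * b)"
proof -
  obtain r where r: "\<And>p. p \<in> supp a \<times> supp b \<Longrightarrow> r p \<in> R - {0}"
    and ab: "a * b = (\<Sum>p\<in>supp a \<times> supp b. r p * mon x n (fst p + snd p))"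
    by (rule mult_expansion[of a b]) blast
  have "{p \<in> supp a \<times> supp b. fst p + snd p = \<alpha>\<^sub>0 + \<beta>\<^sub>0} = {(\<alpha>\<^sub>0, \<beta>\<^sub>0)}"
  proof (intro equalityI subsetI)
    fix p assume "p \<in> {p \<in> supp a \<times> supp b. fst p + snd p = \<alpha>\<^sub>0 + \<beta>\<^sub>0}"
    then have "fst p = \<alpha>\<^sub>0 \<and> snd p = \<beta>\<^sub>0"
      using assms(2,4) lex_le_add_eq[of "fst p" \<alpha>\<^sub>0 "snd p" \<beta>\<^sub>0] by auto
    then show "p \<in> {(\<alpha>\<^sub>0, \<beta>\<^sub>0)}" by (cases p) simp
  qed (use assms(1,3) in simp)
  moreover have "fst p + snd p \<in> exps n" if "p \<in> supp a \<times> supp b" for p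
    using that supp_subset_exps[of a] supp_subset_exps[of b] unfolding exps_def by auto
  ultimately have "coeff (a * b) (\<alpha>\<^sub>0 + \<beta>\<^sub>0) = r (\<alpha>\<^sub>0, \<beta>\<^sub>0)"
    unfolding ab using coeff_sum_monomials[of "supp a \<times> supp b" r] r finite_supp by simp
  then show ?thesis using r assms(1,3) unfolding supp_def by auto
qed

lemma in_R_if_supp_zero:
  assumes "supp b \<subseteq> {0}"
  shows "b \<in> R"
proof -
  have "b = (\<Sum>\<alpha>\<in>{0}. coeff b \<alpha> * mon x n \<alpha>)"
    by (subst expansion) (rule sum.mono_neutral_left, use assms supp_def in auto)
  then have "b = coeff b 0" by simp
  then show ?thesis using coeff_in_R by metis
qed

text \<open>If multiplying by b does not enlarge the support of a, then adding the lexicographically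
  leading exponent of b to that of a cannot increase it, so b has only the exponent 0.\<close>

lemma in_R_if_supp_mult_subset:
  assumes "a \<noteq> 0" "supp (a * b) \<subseteq> supp a \<or> supp (b * a) \<subseteq> supp a"
  shows "b \<in> R"
proof (cases "b = 0")
  case True
  then show ?thesis using zero_in_R by simp
next
  case False
  have "supp a \<noteq> {}" "supp b \<noteq> {}" using assms(1) False supp_empty_iff by blast+
  obtain \<alpha>\<^sub>0 where \<alpha>\<^sub>0: "\<alpha>\<^sub>0 \<in> supp a" "\<And>\<alpha>. \<alpha> \<in> supp a \<Longrightarrow> lex_le \<alpha> \<alpha>\<^sub>0"
    using finite_has_lex_max[OF finite_supp \<open>supp a \<noteq> {}\<close>] by blast
  obtain \<beta>\<^sub>0 where \<beta>\<^sub>0: "\<beta>\<^sub>0 \<in> supp b" "\<And>\<beta>. \<beta> \<in> supp b \<Longrightarrow> lex_le \<beta> \<beta>\<^sub>0"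
    using finite_has_lex_max[OF finite_supp \<open>supp b \<noteq> {}\<close>] by blast
  have "\<alpha>\<^sub>0 + \<beta>\<^sub>0 \<in> supp (a * b)" "\<beta>\<^sub>0 + \<alpha>\<^sub>0 \<in> supp (b * a)"
    by (rule lex_max_add_in_supp_mult; use \<alpha>\<^sub>0 \<beta>\<^sub>0 in blast)+
  then have "\<alpha>\<^sub>0 + \<beta>\<^sub>0 \<in> supp a" using assms(2) by (auto simp: add.commute)
  then have "lex_le (\<alpha>\<^sub>0 + \<beta>\<^sub>0) (\<alpha>\<^sub>0 + 0)" using \<alpha>\<^sub>0(2) by simp
  moreover have "lex_le (0 + \<alpha>\<^sub>0) (\<beta>\<^sub>0 + \<alpha>\<^sub>0)" by (rule lex_le_add_right[OF lex_le_zero])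
  then have "lex_le (\<alpha>\<^sub>0 + 0) (\<alpha>\<^sub>0 + \<beta>\<^sub>0)" by (simp add: add.commute)
  ultimately have "\<alpha>\<^sub>0 + \<beta>\<^sub>0 = \<alpha>\<^sub>0 + 0" by (rule lex_order.order.antisym)
  then have "\<beta>\<^sub>0 = 0" by simp
  have "supp b \<subseteq> {0}"
  proof
    fix \<beta> assume "\<beta> \<in> supp b"
    then have "lex_le \<beta> 0" using \<beta>\<^sub>0(2) \<open>\<beta>\<^sub>0 = 0\<close> by simp
    then show "\<beta> \<in> {0}" using lex_le_zero lex_order.order.antisym by blast
  qed
  then show ?thesis by (rule in_R_if_supp_zero)
qed

subsection \<open>Normality of the standard monomials\<close>

lemma generated_by_R_and_x:
  assumes "0 \<in> S" "1 \<in> S" "\<And>a b. a \<in> S \<Longrightarrow> b \<in> S \<Longrightarrow> a + b \<in> S"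
    and mult: "\<And>a b. a \<in> S \<Longrightarrow> b \<in> S \<Longrightarrow> a * b \<in> S"
    and "R \<subseteq> S" "\<And>k. k < n \<Longrightarrow> x k \<in> S"
  shows "a \<in> S"
proof -
  have "mon x m \<gamma> \<in> S" if "m \<le> n" for m \<gamma>
  proof -
    have "y \<in> S \<Longrightarrow> y ^ k \<in> S" for y k by (induction k) (use assms(2) mult in auto)
    with that show ?thesis by (induction m) (use assms in auto)
  qed
  then have "coeff a \<alpha> * mon x n \<alpha> \<in> S" for \<alpha>
    using assms(5) coeff_in_R mult by blast
  then have "(\<Sum>\<alpha>\<in>A. coeff a \<alpha> * mon x n \<alpha>) \<in> S" for A
    by (induction A rule: infinite_finite_induct) (use assms in auto)
  then show ?thesis using expansion[of a] by metis
qed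

lemma normal_in_UNIV_x:
  assumes i: "i < n"
  shows "normal_in UNIV (x i)"
proof -
  have "a \<in> {a. \<exists>b. x i * a = b * x i}" for a
  proof (rule generated_by_R_and_x; (rule moves_left_past_closed)?)
    show "R \<subseteq> {a. \<exists>b. x i * a = b * x i}"
    proof
      fix r assume "r \<in> R"
      then obtain s where "x i * r = s * x i" by (rule x_times_R[OF i])
      then show "r \<in> {a. \<exists>b. x i * a = b * x i}" by blast
    qed
    show "x k \<in> {a. \<exists>b. x i * a = b * x i}" if "k < n" for k
      using x_commute[OF that i] by blast
  qed
  moreover have "a \<in> {a. \<exists>b. a * x i = x i * b}" for a
  proof (rule generated_by_R_and_x; (rule moves_right_past_closed)?)
    show "R \<subseteq> {a. \<exists>b. a * x i = x i * b}"
    proof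
      fix s assume "s \<in> R"
      then obtain r where "x i * r = s * x i" by (rule R_times_x[OF i])
      then have "s * x i = x i * r" by simp
      then show "s \<in> {a. \<exists>b. a * x i = x i * b}" by blast
    qed
    show "x k \<in> {a. \<exists>b. a * x i = x i * b}" if k: "k < n" for k
    proof -
      obtain c where c: "unit_in R c" "x k * x i = c * x i * x k" using x_commute[OF i k] by blast
      obtain c' where "x i * c' = c * x i" using R_times_x[OF i unit_in_R[OF c(1)]] by blast
      with c(2) have "x k * x i = x i * (c' * x k)" by (metis mult.assoc)
      then show ?thesis by blast
    qed
  qed
  ultimately show ?thesis unfolding normal_in_UNIV_iff by blast
qed

lemma normal_in_UNIV_mon: "normal_in UNIV (mon x n \<gamma>)"
  unfolding mon_def
  by (rule normal_in_UNIV_prod_list) (auto intro!: normal_in_UNIV_power normal_in_UNIV_x)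

lemma normal_in_UNIV_unit_mon_center:
  assumes "unit_in R c" "h \<in> center"
  shows "normal_in UNIV (c * mon x n \<alpha> * h)"
proof -
  obtain d where "c * d = 1" "d * c = 1" using assms(1) unfolding unit_in_def by blast
  then show ?thesis
    by (intro normal_in_UNIV_mult normal_in_UNIV_invertible normal_in_UNIV_mon normal_in_UNIV_center assms(2))
qed

subsection \<open>Coefficients of normal elements\<close>

lemma supp_sum_monomials:
  assumes "finite I" "\<And>j. j \<in> I \<Longrightarrow> g j \<in> R" "\<And>j. j \<in> I \<Longrightarrow> \<alpha> j \<in> exps n"
  shows "supp (\<Sum>j\<in>I. g j * mon x n (\<alpha> j)) \<subseteq> \<alpha> ` I"
  using coeff_sum_monomials[OF assms] unfolding supp_def
  by (auto elim: sum.not_neutral_contains_not_neutral)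

lemma coeff_sum_distinct_monomials:
  assumes "finite I" "\<And>j. j \<in> I \<Longrightarrow> g j \<in> R" "\<And>j. j \<in> I \<Longrightarrow> \<alpha> j \<in> exps n"
    and "inj_on \<alpha> I" "i \<in> I"
  shows "coeff (\<Sum>j\<in>I. g j * mon x n (\<alpha> j)) (\<alpha> i) = g i"
proof -
  have "{j \<in> I. \<alpha> j = \<alpha> i} = {i}" using assms(4,5) by (auto dest: inj_onD)
  then show ?thesis using coeff_sum_monomials[OF assms(1-3)] by simp
qed

lemma sum_monomials_times_R:
  assumes "b \<in> R"
  obtains s where "\<And>j. s j \<in> R" "\<And>j. mon x n (\<alpha> j) * b = s j * mon x n (\<alpha> j)"
    "(\<Sum>j\<in>I. g j * mon x n (\<alpha> j)) * b = (\<Sum>j\<in>I. (g j * s j) * mon x n (\<alpha> j))"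
proof -
  have "\<forall>j. \<exists>s. s \<in> R \<and> mon x n (\<alpha> j) * b = s * mon x n (\<alpha> j)"
    using normalizes_R_mon[OF order_refl] assms unfolding normalizes_R_def by blast
  then obtain s where s: "\<And>j. s j \<in> R" "\<And>j. mon x n (\<alpha> j) * b = s j * mon x n (\<alpha> j)"
    by metis
  moreover have "(\<Sum>j\<in>I. g j * mon x n (\<alpha> j)) * b = (\<Sum>j\<in>I. (g j * s j) * mon x n (\<alpha> j))"
    by (simp add: sum_distrib_right mult.assoc s(2))
  ultimately show ?thesis by (rule that)
qed

context
  fixes I :: "'b set" and c :: "'b \<Rightarrow> 'a" and \<alpha> :: "'b \<Rightarrow> nat \<Rightarrow> nat" and f :: 'a
  assumes finite_I: "finite I"
    and c_nonzero: "\<And>j. j \<in> I \<Longrightarrow> c j \<in> R - {0}"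
    and \<alpha>_exps: "\<And>j. j \<in> I \<Longrightarrow> \<alpha> j \<in> exps n"
    and inj_\<alpha>: "inj_on \<alpha> I"
    and f_eq: "f = (\<Sum>j\<in>I. c j * mon x n (\<alpha> j))"
    and f_normal: "normal_in UNIV f"
begin

lemma coeff_f: "j \<in> I \<Longrightarrow> coeff f (\<alpha> j) = c j"
  unfolding f_eq using coeff_sum_distinct_monomials[OF finite_I _ \<alpha>_exps inj_\<alpha>] c_nonzero by blast

lemma f_nonzero: "j \<in> I \<Longrightarrow> f \<noteq> 0"
  using coeff_f[of j] c_nonzero[of j] supp_empty_iff[of f] unfolding supp_def by auto

lemma supp_subset_supp_f:
  "(\<And>j. j \<in> I \<Longrightarrow> g j \<in> R) \<Longrightarrow> supp (\<Sum>j\<in>I. g j * mon x n (\<alpha> j)) \<subseteq> supp f"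
  using supp_sum_monomials[OF finite_I _ \<alpha>_exps, of g] coeff_f c_nonzero unfolding supp_def by force

lemma left_mult_coeff_f:
  assumes i: "i \<in> I" and r: "r \<in> R"
  shows "\<exists>b\<in>R. r * c i = c i * b"
proof -
  obtain b where b: "r * f = f * b" using f_normal unfolding normal_in_UNIV_iff by blast
  have rf: "r * f = (\<Sum>j\<in>I. (r * c j) * mon x n (\<alpha> j))"
    unfolding f_eq by (simp add: sum_distrib_left mult.assoc)
  have rc_R: "j \<in> I \<Longrightarrow> r * c j \<in> R" for j using r c_nonzero mult_in_R by blast
  have "supp (r * f) \<subseteq> supp f" unfolding rf by (rule supp_subset_supp_f) (rule rc_R)
  then have "supp (f * b) \<subseteq> supp f" by (simp only: b)
  then have b_R: "b \<in> R" using in_R_if_supp_mult_subset f_nonzero[OF i] by blast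
  obtain s where s: "\<And>j. s j \<in> R" "f * b = (\<Sum>j\<in>I. (c j * s j) * mon x n (\<alpha> j))"
    unfolding f_eq by (rule sum_monomials_times_R[OF b_R, where \<alpha> = \<alpha> and I = I and g = c]) blast
  have cs_R: "j \<in> I \<Longrightarrow> c j * s j \<in> R" for j using s(1) c_nonzero mult_in_R by blast
  have "r * c i = coeff (r * f) (\<alpha> i)"
    unfolding rf using coeff_sum_distinct_monomials[OF finite_I rc_R \<alpha>_exps inj_\<alpha> i] by simp
  also have "\<dots> = c i * s i"
    unfolding b s(2) using coeff_sum_distinct_monomials[OF finite_I cs_R \<alpha>_exps inj_\<alpha> i] by simp
  finally show ?thesis using s(1) by blast
qed

lemma right_mult_coeff_f:
  assumes i: "i \<in> I" and r: "r \<in> R"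
  shows "\<exists>b\<in>R. c i * r = b * c i"
proof -
  obtain r' where r': "r' \<in> R" "mon x n (\<alpha> i) * r' = r * mon x n (\<alpha> i)"
    using normalizes_R_mon[OF order_refl] r unfolding normalizes_R_def by blast
  obtain s where s: "\<And>j. s j \<in> R" "\<And>j. mon x n (\<alpha> j) * r' = s j * mon x n (\<alpha> j)"
      and fr': "f * r' = (\<Sum>j\<in>I. (c j * s j) * mon x n (\<alpha> j))"
    unfolding f_eq by (rule sum_monomials_times_R[OF r'(1), where \<alpha> = \<alpha> and I = I and g = c]) blast
  obtain b where b: "f * r' = b * f" using f_normal unfolding normal_in_UNIV_iff by blast
  have cs_R: "j \<in> I \<Longrightarrow> c j * s j \<in> R" for j using s(1) c_nonzero mult_in_R by blast
  have "supp (f * r') \<subseteq> supp f" unfolding fr' by (rule supp_subset_supp_f) (rule cs_R)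
  then have "supp (b * f) \<subseteq> supp f" by (simp only: b)
  then have b_R: "b \<in> R" using in_R_if_supp_mult_subset f_nonzero[OF i] by blast
  have bf: "b * f = (\<Sum>j\<in>I. (b * c j) * mon x n (\<alpha> j))"
    unfolding f_eq by (simp add: sum_distrib_left mult.assoc)
  have bc_R: "j \<in> I \<Longrightarrow> b * c j \<in> R" for j using b_R c_nonzero mult_in_R by blast
  have "s i = r" using monomial_cancel s(1,2) r'(2) r \<alpha>_exps[OF i] by metis
  then have "c i * r = coeff (f * r') (\<alpha> i)"
    unfolding fr' using coeff_sum_distinct_monomials[OF finite_I cs_R \<alpha>_exps inj_\<alpha> i] by simp
  also have "\<dots> = b * c i"
    unfolding b bf using coeff_sum_distinct_monomials[OF finite_I bc_R \<alpha>_exps inj_\<alpha> i] by simp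
  finally show ?thesis using b_R by blast
qed

lemma normal_in_R_coeff_f: "i \<in> I \<Longrightarrow> normal_in R (c i)"
  unfolding normal_in_def using left_mult_coeff_f right_mult_coeff_f by (auto simp: image_iff)

end

end

theorem proposition4p22:
  fixes R :: "'a::ring_1 set" and x :: "nat \<Rightarrow> 'a" and n :: nat
  assumes "left_noetherian R" and "ring_domain R"
    and "qc_bij_skew_PBW R x n"
  shows "(\<forall>c \<alpha> h. unit_in R c \<and> normal_in R c \<and> \<alpha> \<in> exps n \<and> h \<in> center
            \<longrightarrow> normal_in UNIV (c * mon x n \<alpha> * h))
       \<and> (\<forall>(t::nat) (c::nat \<Rightarrow> 'a) (\<alpha>::nat \<Rightarrow> nat \<Rightarrow> nat).
            (\<forall>i\<in>{1..t}. c i \<in> R - {0} \<and> \<alpha> i \<in> exps n)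
            \<and> inj_on (\<lambda>i. mon x n (\<alpha> i)) {1..t}
            \<and> normal_in UNIV (\<Sum>i=1..t. c i * mon x n (\<alpha> i))
            \<longrightarrow> (\<forall>i\<in>{1..t}. normal_in R (c i)))"
proof -
  interpret qc_skew_PBW R x n using assms(2,3) by unfold_locales
  have "inj_on \<alpha> {1..t}" if "inj_on (\<lambda>i. mon x n (\<alpha> i)) {1..t}" for \<alpha> :: "nat \<Rightarrow> nat \<Rightarrow> nat" and t
    using that by (auto intro: inj_on_imageI2[of "mon x n"] simp: comp_def)
  then show ?thesis
    using normal_in_UNIV_unit_mon_center normal_in_R_coeff_f[OF finite_atLeastAtMost] by blast
qed

end
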